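(* Let $\mathcal E$ be a nest on a complex Banach space $X$ and let $\mathcal J$ be a $\mathcal T(\mathcal E)$-bimodule that is closed in the weak operator topology. Then $\mathcal J=\mathcal M(\Phi_{\mathcal J})$, and $\mathcal J$ is reflexive, i.e. $\mathcal J=\operatorname{Ref}\mathcal J$.
   Context: A nest $\mathcal E$ on $X$ is a family of closed linear subspaces of $X$, totally ordered by inclusion, containing $\{0\}$ and $X$, closed under arbitrary meets (intersections) and joins (norm-closed linear spans of unions). $\mathcal T(\mathcal E)=\{T\in\mathcal B(X): TE\subseteq E\ \forall E\in\mathcal E\}$. A $\mathcal T(\mathcal E)$-bimodule is a linear subspace $\mathcal J\subseteq\mathcal B(X)$ with $\mathcal T(\mathcal E)\mathcal J\subseteq\mathcal J$ and $\mathcal J\mathcal T(\mathcal E)\subseteq\mathcal J$. $\Phi_{\mathcal J}(E)=[\mathcal JE]$, the norm-closed linear span of $\{Tx:T\in\mathcal J,x\in E\}$. For a map $\Phi:\mathcal E\to\mathcal E$, $\mathcal M(\Phi)=\{T\in\mathcal B(X): TE\subseteq\Phi(E)\ \forall E\in\mathcal E\}$. For a subspace $\mathcal A\subseteq\mathcal B(X)$, $\operatorname{Ref}\mathcal A=\{T\in\mathcal B(X): Tx\in[\mathcal Ax]\ \forall x\in X\}$, where $[\mathcal Ax]$ is the norm-closed linear span of $\{Ax: A\in\mathcal A\}$. *)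

theory Defs
  imports "HOL-Analysis.Analysis"
begin

class complex_banach = banach +
  fixes scaleC :: "complex \<Rightarrow> 'a \<Rightarrow> 'a"
  assumes scaleC_add_right: "scaleC a (x + y) = scaleC a x + scaleC a y"
    and scaleC_add_left: "scaleC (a + b) x = scaleC a x + scaleC b x"
    and scaleC_scaleC: "scaleC a (scaleC b x) = scaleC (a * b) x"
    and scaleC_one: "scaleC 1 x = x"
    and scaleR_scaleC: "scaleR r x = scaleC (complex_of_real r) x"
    and norm_scaleC: "norm (scaleC a x) = cmod a * norm x"

definition csubspace :: "'a::complex_banach set \<Rightarrow> bool" where
  "csubspace S = module.subspace scaleC S"

definition cspan :: "'a::complex_banach set \<Rightarrow> 'a set" where
  "cspan S = module.span scaleC S"

definition closed_span :: "'a::complex_banach set \<Rightarrow> 'a set" where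
  "closed_span S = closure (cspan S)"

definition bounded_clinear_op :: "('a::complex_banach \<Rightarrow> 'a) \<Rightarrow> bool" where
  "bounded_clinear_op T \<longleftrightarrow> bounded_linear T \<and> (\<forall>c x. T (scaleC c x) = scaleC c (T x))"

definition BX :: "('a::complex_banach \<Rightarrow> 'a) set" where
  "BX = {T. bounded_clinear_op T}"

definition cdual :: "('a::complex_banach \<Rightarrow> complex) set" where
  "cdual = {f. bounded_linear f \<and> (\<forall>c x. f (scaleC c x) = c * f x)}"

definition is_nest :: "'a::complex_banach set set \<Rightarrow> bool" where
  "is_nest \<E> \<longleftrightarrow>
     (\<forall>E\<in>\<E>. csubspace E \<and> closed E) \<and>
     (\<forall>E\<in>\<E>. \<forall>F\<in>\<E>. E \<subseteq> F \<or> F \<subseteq> E) \<and>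
     {0} \<in> \<E> \<and> UNIV \<in> \<E> \<and>
     (\<forall>\<F>. \<F> \<subseteq> \<E> \<longrightarrow> \<Inter>\<F> \<in> \<E>) \<and>
     (\<forall>\<F>. \<F> \<subseteq> \<E> \<longrightarrow> closed_span (\<Union>\<F>) \<in> \<E>)"

definition nest_alg :: "'a::complex_banach set set \<Rightarrow> ('a \<Rightarrow> 'a) set" where
  "nest_alg \<E> = {T \<in> BX. \<forall>E\<in>\<E>. T ` E \<subseteq> E}"

definition op_subspace :: "('a::complex_banach \<Rightarrow> 'a) set \<Rightarrow> bool" where
  "op_subspace \<J> \<longleftrightarrow> \<J> \<subseteq> BX \<and> (\<lambda>x. 0) \<in> \<J> \<and>
     (\<forall>S\<in>\<J>. \<forall>T\<in>\<J>. (\<lambda>x. S x + T x) \<in> \<J>) \<and>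
     (\<forall>c. \<forall>T\<in>\<J>. (\<lambda>x. scaleC c (T x)) \<in> \<J>)"

definition is_bimodule :: "'a::complex_banach set set \<Rightarrow> ('a \<Rightarrow> 'a) set \<Rightarrow> bool" where
  "is_bimodule \<E> \<J> \<longleftrightarrow> op_subspace \<J> \<and>
     (\<forall>A\<in>nest_alg \<E>. \<forall>T\<in>\<J>. A \<circ> T \<in> \<J> \<and> T \<circ> A \<in> \<J>)"

text \<open>Closure in the weak operator topology of B(X): T lies in the WOT-closure of A
iff every basic WOT-neighbourhood
 {S. |f_i((T - S) x_i)| < e, i = 1..n} of T meets A.\<close>
definition wot_closure :: "('a::complex_banach \<Rightarrow> 'a) set \<Rightarrow> ('a \<Rightarrow> 'a) set" where
  "wot_closure \<A> = {T \<in> BX. \<forall>P e. finite P \<and> P \<subseteq> UNIV \<times> cdual \<and> e > 0 \<longrightarrow>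
      (\<exists>S\<in>\<A>. \<forall>(x, f)\<in>P. cmod (f (T x) - f (S x)) < e)}"

definition wot_closed :: "('a::complex_banach \<Rightarrow> 'a) set \<Rightarrow> bool" where
  "wot_closed \<A> \<longleftrightarrow> wot_closure \<A> \<subseteq> \<A>"

definition Phi :: "('a::complex_banach \<Rightarrow> 'a) set \<Rightarrow> 'a set \<Rightarrow> 'a set" where
  "Phi \<J> E = closed_span {T x | T x. T \<in> \<J> \<and> x \<in> E}"

definition Mop :: "'a::complex_banach set set \<Rightarrow> ('a set \<Rightarrow> 'a set) \<Rightarrow> ('a \<Rightarrow> 'a) set" where
  "Mop \<E> \<Phi> = {T \<in> BX. \<forall>E\<in>\<E>. T ` E \<subseteq> \<Phi> E}"

definition Ref :: "('a::complex_banach \<Rightarrow> 'a) set \<Rightarrow> ('a \<Rightarrow> 'a) set" where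
  "Ref \<A> = {T \<in> BX. \<forall>x. T x \<in> closed_span {A x | A. A \<in> \<A>}}"

end

theory Submission
  imports Defs
begin

text \<open>Always \<open>\<J> \<subseteq> Ref \<J> \<subseteq> \<M>(\<Phi>\<^sub>\<J>)\<close>, so it suffices to put every \<open>T \<in> \<M>(\<Phi>\<^sub>\<J>)\<close> into the
  WOT-closure of \<open>\<J>\<close>, i.e. to approximate \<open>T\<close> by elements of \<open>\<J>\<close> simultaneously at finitely many
  vectors. This goes by induction on the dimension of their span \<open>V\<close>: choose a basis \<open>B\<^sub>0 \<union> {b}\<close>
  of \<open>V\<close> such that \<open>b\<close> stays outside the closed span of \<open>F \<union> B\<^sub>0\<close> for every nest element \<open>F\<close>
  missing \<open>b\<close>. A Hahn--Banach functional \<open>h\<close> killing \<open>F \<union> B\<^sub>0\<close> with \<open>h b = 1\<close> gives rank-one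
  operators \<open>h \<otimes> y\<close> in the nest algebra, and composing them with \<open>\<J>\<close> yields elements of \<open>\<J>\<close>
  vanishing on \<open>B\<^sub>0\<close> whose values at \<open>b\<close> approximate the error \<open>T b - S b \<in> \<Phi>\<^sub>\<J>(E)\<close> (\<open>b \<in> E\<close>)
  left by an approximant \<open>S\<close> on \<open>B\<^sub>0\<close>.\<close>

interpretation cvs: vector_space "scaleC :: complex \<Rightarrow> 'a \<Rightarrow> 'a::complex_banach"
  by unfold_locales (simp_all add: scaleC_add_right scaleC_add_left scaleC_scaleC scaleC_one)

lemma cspan_eq: "cspan = cvs.span"
  by (simp add: cspan_def fun_eq_iff)

lemma csubspace_eq: "csubspace = cvs.subspace"
  by (simp add: csubspace_def fun_eq_iff)

lemma (in module) subspace_Union_chain: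
  assumes "C \<noteq> {}" "\<And>X. X \<in> C \<Longrightarrow> subspace X"
    and "\<And>X Y. X \<in> C \<Longrightarrow> Y \<in> C \<Longrightarrow> X \<subseteq> Y \<or> Y \<subseteq> X"
  shows "subspace (\<Union>C)"
  unfolding subspace_def
proof (intro conjI ballI allI)
  show "0 \<in> \<Union>C" using assms(1,2) subspace_0 by blast
next
  fix x y assume "x \<in> \<Union>C" "y \<in> \<Union>C"
  then obtain X Y where "X \<in> C" "Y \<in> C" "x \<in> X" "y \<in> Y" by blast
  with assms(2,3) show "x + y \<in> \<Union>C"
    by (metis UnionI subsetD subspace_add)
next
  fix c x assume "x \<in> \<Union>C"
  with assms(2) show "scale c x \<in> \<Union>C" using subspace_scale by blast
qed

lemma csubspace_imp_subspace: "cvs.subspace C \<Longrightarrow> subspace C"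
  unfolding subspace_def cvs.subspace_def by (simp add: scaleR_scaleC)

lemma scaleC_Re_Im: "scaleC c x = scaleR (Re c) x + scaleR (Im c) (scaleC \<i> x)"
proof -
  have "c = complex_of_real (Re c) + complex_of_real (Im c) * \<i>"
    by (simp add: complex_eq_iff)
  then show ?thesis
    by (metis scaleC_add_left scaleC_scaleC scaleR_scaleC)
qed

lemma bounded_linear_scaleC_right: "bounded_linear (\<lambda>x::'a::complex_banach. scaleC c x)"
  by (rule bounded_linear_intro[where K="cmod c"])
     (simp_all add: scaleC_add_right scaleR_scaleC norm_scaleC mult.commute)

lemma bounded_linear_scaleC_left: "bounded_linear (\<lambda>c. scaleC c (v::'a::complex_banach))"
  by (rule bounded_linear_intro[where K="norm v"])
     (simp_all add: scaleC_add_left norm_scaleC scaleR_scaleC scaleR_conv_of_real)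

lemma csubspace_closure:
  assumes "cvs.subspace C"
  shows "cvs.subspace (closure C)"
  unfolding cvs.subspace_def
proof (intro conjI ballI allI)
  show "0 \<in> closure C" using assms cvs.subspace_0 closure_subset by blast
next
  fix x y assume "x \<in> closure C" "y \<in> closure C"
  then obtain X Y where X: "\<forall>n. X n \<in> C" "X \<longlonglongrightarrow> x" and Y: "\<forall>n. Y n \<in> C" "Y \<longlonglongrightarrow> y"
    unfolding closure_sequential by blast
  have "(\<lambda>n. X n + Y n) \<longlonglongrightarrow> x + y" using X Y by (intro tendsto_add)
  moreover have "\<forall>n. X n + Y n \<in> C" using X Y assms cvs.subspace_add by blast
  ultimately show "x + y \<in> closure C" unfolding closure_sequential by (intro exI conjI)
next
  fix c x assume "x \<in> closure C"
  then obtain X where X: "\<forall>n. X n \<in> C" "X \<longlonglongrightarrow> x" unfolding closure_sequential by blast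
  have "(\<lambda>n. scaleC c (X n)) \<longlonglongrightarrow> scaleC c x"
    using bounded_linear.tendsto[OF bounded_linear_scaleC_right X(2)] .
  moreover have "\<forall>n. scaleC c (X n) \<in> C" using X assms cvs.subspace_scale by blast
  ultimately show "scaleC c x \<in> closure C" unfolding closure_sequential by (intro exI conjI)
qed

section \<open>Hahn--Banach\<close>

text \<open>A real functional on a subspace of \<open>X\<close>, dominated by the norm, encoded by its graph.\<close>

definition dominated_graph :: "('a::real_normed_vector \<times> real) set \<Rightarrow> bool" where
  "dominated_graph M \<longleftrightarrow> subspace M \<and> (\<forall>(x, a)\<in>M. a \<le> norm x)"

lemma dominated_graph_unique:
  assumes "dominated_graph M" "(x, a) \<in> M" "(x, b) \<in> M"
  shows "a = b"
proof -
  have "(0, a - b) \<in> M" "(0, b - a) \<in> M"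
    using assms subspace_diff[of M "(x, a)" "(x, b)"] subspace_diff[of M "(x, b)" "(x, a)"]
    by (auto simp: dominated_graph_def)
  then have "a - b \<le> norm (0::'a)" "b - a \<le> norm (0::'a)"
    using assms(1) unfolding dominated_graph_def by auto
  then show ?thesis by simp
qed

text \<open>The one-step extension of Hahn--Banach: the value \<open>c\<close> at the new vector \<open>x\<close> is
  squeezed between \<open>sup {a - \<parallel>y - x\<parallel>}\<close> and \<open>inf {\<parallel>z + x\<parallel> - b}\<close> over \<open>(y, a), (z, b) \<in> M\<close>.\<close>

lemma dominated_graph_extend:
  assumes M: "dominated_graph M"
  obtains c where "dominated_graph (span (insert (x, c) M))"
proof -
  have Ms: "subspace M" and Mb: "\<And>y a. (y, a) \<in> M \<Longrightarrow> a \<le> norm y"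
    using M unfolding dominated_graph_def by auto
  have sandwich: "a - norm (y - x) \<le> norm (z + x) - b" if "(y, a) \<in> M" "(z, b) \<in> M" for y a z b
  proof -
    have "a + b \<le> norm (y + z)"
      using Mb subspace_add[OF Ms that] by simp
    also have "\<dots> \<le> norm (y - x) + norm (z + x)"
      using norm_triangle_ineq[of "y - x" "z + x"] by simp
    finally show ?thesis by simp
  qed
  have M00: "(0, 0) \<in> M" using subspace_0[OF Ms] by (simp add: zero_prod_def)
  define c where "c = Sup {a - norm (y - x) | y a. (y, a) \<in> M}"
  have lower: "a - norm (y - x) \<le> c" if "(y, a) \<in> M" for y a
    unfolding c_def using that sandwich[OF _ M00] by (intro cSup_upper bdd_aboveI[of _ "norm x"]) auto
  have upper: "c \<le> norm (z + x) - b" if "(z, b) \<in> M" for z b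
    unfolding c_def using that M00 sandwich by (intro cSup_least) auto
  have "q \<le> norm p" if pq: "(p, q) \<in> span (insert (x, c) M)" for p q
  proof -
    obtain k where "(p, q) - k *\<^sub>R (x, c) \<in> span M"
      using pq span_breakdown_eq by blast
    then have yM: "(p - k *\<^sub>R x, q - k * c) \<in> M"
      using span_eq_iff[THEN iffD2, OF Ms] by simp
    consider "k > 0" | "k < 0" | "k = 0" by linarith
    then show ?thesis
    proof cases
      case 1
      have "c \<le> norm ((1/k) *\<^sub>R (p - k *\<^sub>R x) + x) - (q - k * c) / k"
        using upper subspace_scale[OF Ms yM, of "1/k"] by simp
      also have "(1/k) *\<^sub>R (p - k *\<^sub>R x) + x = (1/k) *\<^sub>R p"
        using 1 by (simp add: algebra_simps)
      also have "norm ((1/k) *\<^sub>R p) - (q - k * c) / k = (norm p - q) / k + c"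
        using 1 by (simp add: diff_divide_distrib)
      finally show ?thesis using 1 by (simp add: zero_le_divide_iff)
    next
      case 2
      have "(q - k * c) / - k - norm ((1 / - k) *\<^sub>R (p - k *\<^sub>R x) - x) \<le> c"
        using lower subspace_scale[OF Ms yM, of "1 / - k"] by simp
      also have "(1 / - k) *\<^sub>R (p - k *\<^sub>R x) - x = (1 / - k) *\<^sub>R p"
        using 2 by (simp add: algebra_simps)
      also have "(q - k * c) / - k - norm ((1 / - k) *\<^sub>R p) = (q - norm p) / - k + c"
        using 2 by (simp add: diff_divide_distrib)
      finally show ?thesis using 2 by (simp add: zero_le_divide_iff)
    next
      case 3
      then show ?thesis using Mb yM by simp
    qed
  qed
  then have "dominated_graph (span (insert (x, c) M))"
    unfolding dominated_graph_def by auto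
  then show ?thesis by (rule that)
qed

lemma exists_maximal_dominated_graph:
  assumes G0: "dominated_graph G0"
  obtains M where "dominated_graph M" "G0 \<subseteq> M" "\<And>X. dominated_graph X \<Longrightarrow> M \<subseteq> X \<Longrightarrow> X = M"
proof -
  let ?A = "{M. dominated_graph M \<and> G0 \<subseteq> M}"
  have "\<exists>M\<in>?A. \<forall>X\<in>?A. M \<subseteq> X \<longrightarrow> X = M"
  proof (rule Zorn_Lemma2, intro ballI)
    fix C assume C: "C \<in> chains ?A"
    show "\<exists>U\<in>?A. \<forall>X\<in>C. X \<subseteq> U"
    proof (cases "C = {}")
      case True
      have "G0 \<in> ?A" using G0 by blast
      with True show ?thesis by blast
    next
      case False
      have CA: "\<And>X. X \<in> C \<Longrightarrow> dominated_graph X \<and> G0 \<subseteq> X"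
        and chain: "\<And>X Y. X \<in> C \<Longrightarrow> Y \<in> C \<Longrightarrow> X \<subseteq> Y \<or> Y \<subseteq> X"
        using C unfolding chains_def chain_subset_def by blast+
      have "subspace (\<Union>C)"
        using False chain CA unfolding dominated_graph_def by (intro real_vector.subspace_Union_chain) blast+
      moreover have "\<forall>(x, a)\<in>\<Union>C. a \<le> norm x"
        using CA unfolding dominated_graph_def by blast
      moreover have "G0 \<subseteq> \<Union>C" using False CA by blast
      ultimately have "\<Union>C \<in> ?A" unfolding dominated_graph_def by blast
      then show ?thesis by blast
    qed
  qed
  then obtain M where "M \<in> ?A" and max_A: "\<forall>X\<in>?A. M \<subseteq> X \<longrightarrow> X = M"
    by (rule bexE)
  then have M: "dominated_graph M" "G0 \<subseteq> M" by auto
  have "X = M" if "dominated_graph X" "M \<subseteq> X" for X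
    using max_A that M(2) by blast
  with M show ?thesis by (rule that)
qed

lemma dominated_graph_extends_to_functional:
  assumes "dominated_graph G0"
  obtains u where "bounded_linear u" "\<And>x a. (x, a) \<in> G0 \<Longrightarrow> u x = a" "\<And>x. \<bar>u x\<bar> \<le> norm x"
proof -
  obtain M where M: "dominated_graph M" "G0 \<subseteq> M"
    and maximal: "\<And>X. dominated_graph X \<Longrightarrow> M \<subseteq> X \<Longrightarrow> X = M"
    using exists_maximal_dominated_graph[OF assms] by blast
  have Ms: "subspace M" and Mb: "\<And>x a. (x, a) \<in> M \<Longrightarrow> a \<le> norm x"
    using M(1) unfolding dominated_graph_def by auto
  have total: "\<exists>a. (x, a) \<in> M" for x
  proof -
    obtain c where "dominated_graph (span (insert (x, c) M))"
      using dominated_graph_extend[OF M(1)] .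
    then have "span (insert (x, c) M) = M"
      by (rule maximal) (use span_superset in blast)
    then show ?thesis using span_superset by blast
  qed
  define u where "u x = (SOME a. (x, a) \<in> M)" for x
  have uM: "(x, u x) \<in> M" for x
    unfolding u_def using total by (rule someI_ex)
  have u_eq: "(x, a) \<in> M \<Longrightarrow> u x = a" for x a
    using dominated_graph_unique[OF M(1) uM] by blast
  have u_add: "u (x + y) = u x + u y" for x y
    using u_eq subspace_add[OF Ms uM uM] by simp
  have u_scale: "u (r *\<^sub>R x) = r * u x" for r x
    using u_eq subspace_scale[OF Ms uM] by simp
  have u_abs: "\<bar>u x\<bar> \<le> norm x" for x
    using Mb[OF uM, of x] Mb[OF uM, of "- x"] u_scale[of "-1" x] by simp
  have "bounded_linear u"
    by (rule bounded_linear_intro[where K=1]) (use u_add u_scale u_abs in auto)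
  then show ?thesis using that u_eq u_abs M(2) by blast
qed

lemma complexify_functional:
  fixes u :: "'a::complex_banach \<Rightarrow> real"
  assumes u: "bounded_linear u"
  shows "(\<lambda>x. Complex (u x) (- u (scaleC \<i> x))) \<in> cdual"
proof -
  let ?h = "\<lambda>x. Complex (u x) (- u (scaleC \<i> x))"
  interpret u: bounded_linear u by fact
  have ui: "bounded_linear (\<lambda>x. u (scaleC \<i> x))"
    using bounded_linear_compose[OF u bounded_linear_scaleC_right] .
  have bl: "bounded_linear (\<lambda>x. complex_of_real (u x) - \<i> * complex_of_real (u (scaleC \<i> x)))"
    by (intro bounded_linear_sub bounded_linear_compose[OF bounded_linear_of_real u]
        bounded_linear_compose[OF bounded_linear_mult_right bounded_linear_compose[OF bounded_linear_of_real ui]])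
  have "?h = (\<lambda>x. complex_of_real (u x) - \<i> * complex_of_real (u (scaleC \<i> x)))"
    by (simp add: fun_eq_iff complex_eq_iff)
  with bl have "bounded_linear ?h" by simp
  moreover have "?h (scaleC c x) = c * ?h x" for c x
  proof -
    have "u (scaleC c x) = Re c * u x + Im c * u (scaleC \<i> x)"
      by (simp add: scaleC_Re_Im[of c x] u.add u.scale)
    moreover have "u (scaleC \<i> (scaleC c x)) = - Im c * u x + Re c * u (scaleC \<i> x)"
      by (simp add: scaleC_Re_Im[of "\<i> * c" x] u.add u.diff u.scale)
    ultimately show ?thesis by (simp add: complex_eq_iff algebra_simps)
  qed
  ultimately show ?thesis unfolding cdual_def by blast
qed

lemma dominated_graph_infdist:
  assumes C: "subspace C"
  shows "dominated_graph (span (insert (b, infdist b C) (C \<times> {0::real})))"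
  unfolding dominated_graph_def
proof (intro conjI subspace_span ballI, clarify)
  let ?d = "infdist b C"
  fix p q assume pq: "(p, q) \<in> span (insert (b, ?d) (C \<times> {0::real}))"
  have C0: "subspace (C \<times> {0::real})"
    using C unfolding subspace_def by (auto simp: zero_prod_def)
  obtain k where "(p, q) - k *\<^sub>R (b, ?d) \<in> span (C \<times> {0::real})"
    using pq span_breakdown_eq by blast
  then have pC: "p - k *\<^sub>R b \<in> C" and q: "q = k * ?d"
    using span_eq_iff[THEN iffD2, OF C0] by auto
  show "q \<le> norm p"
  proof (cases "k > 0")
    case False
    then show ?thesis
      using q infdist_nonneg[of b C] by (simp add: mult_nonpos_nonneg order.trans[OF _ norm_ge_zero])
  next
    case True
    have "(- 1/k) *\<^sub>R (p - k *\<^sub>R b) \<in> C" using pC C subspace_scale by blast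
    then have "?d \<le> dist b ((- 1/k) *\<^sub>R (p - k *\<^sub>R b))" by (rule infdist_le)
    also have "\<dots> = norm p / k"
      using True by (simp add: dist_norm algebra_simps)
    finally show ?thesis using q True by (simp add: field_simps)
  qed
qed

lemma cdual_separation:
  fixes C :: "'a::complex_banach set"
  assumes C: "cvs.subspace C" and b: "b \<notin> closure C"
  obtains h where "h \<in> cdual" "\<And>c. c \<in> C \<Longrightarrow> h c = 0" "h b = 1"
proof -
  have "C \<noteq> {}" using C cvs.subspace_0 by blast
  define d where "d = infdist b C"
  have "d \<noteq> 0"
    using b in_closure_iff_infdist_zero[OF \<open>C \<noteq> {}\<close>] unfolding d_def by blast
  then have d: "d > 0"
    using infdist_nonneg[of b C] unfolding d_def by linarith
  define G0 where "G0 = span (insert (b, d) (C \<times> {0::real}))"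
  have "dominated_graph G0"
    unfolding G0_def d_def using C by (intro dominated_graph_infdist csubspace_imp_subspace)
  then obtain u where u: "bounded_linear u" and uG0: "\<And>x a. (x, a) \<in> G0 \<Longrightarrow> u x = a"
    using dominated_graph_extends_to_functional by metis
  have uC: "u c = 0" if "c \<in> C" for c
    using uG0 that unfolding G0_def by (simp add: span_base)
  have ub: "u b = d"
    using uG0 unfolding G0_def by (simp add: span_base)
  define h0 where "h0 x = Complex (u x) (- u (scaleC \<i> x))" for x
  have h0: "h0 \<in> cdual"
    unfolding h0_def using complexify_functional[OF u] .
  have "h0 c = 0" if "c \<in> C" for c
    using uC that cvs.subspace_scale[OF C that] unfolding h0_def by (simp add: complex_eq_iff)
  moreover have "h0 b \<noteq> 0" using ub d unfolding h0_def by (simp add: complex_eq_iff)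
  moreover have "(\<lambda>x. h0 x / h0 b) \<in> cdual"
    using h0 bounded_linear_compose[OF bounded_linear_divide[of "h0 b"]] unfolding cdual_def by auto
  ultimately show ?thesis using that[of "\<lambda>x. h0 x / h0 b"] by simp
qed

lemma closed_cspan_insert:
  fixes C :: "'a::complex_banach set"
  assumes closed: "closed C" and C: "cvs.subspace C"
  shows "closed (cvs.span (insert v C))"
proof (cases "v \<in> C")
  case True
  then show ?thesis using C closed by (simp add: insert_absorb cvs.span_eq_iff[THEN iffD2])
next
  case False
  then obtain h where h: "h \<in> cdual" "\<And>c. c \<in> C \<Longrightarrow> h c = 0" "h v = 1"
    using cdual_separation[OF C] closed by (metis closure_closed)
  have hl: "bounded_linear h" and hC: "\<And>c x. h (scaleC c x) = c * h x"
    using h(1) unfolding cdual_def by auto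
  \<comment> \<open>\<open>x - h x v\<close> is the component of \<open>x\<close> in \<open>C\<close>.\<close>
  have "cvs.span (insert v C) = (\<lambda>x. x - scaleC (h x) v) -` C"
  proof (intro set_eqI iffI)
    fix x assume "x \<in> cvs.span (insert v C)"
    then obtain k where k: "x - scaleC k v \<in> C"
      using cvs.span_breakdown_eq cvs.span_eq_iff[THEN iffD2, OF C] by metis
    then have "h x = k"
      using h(2)[OF k] h(3) linear_diff[OF bounded_linear.linear[OF hl]] hC by simp
    then show "x \<in> (\<lambda>x. x - scaleC (h x) v) -` C" using k by simp
  next
    fix x assume "x \<in> (\<lambda>x. x - scaleC (h x) v) -` C"
    then have "x - scaleC (h x) v \<in> C" by simp
    then show "x \<in> cvs.span (insert v C)"
      using cvs.span_breakdown_eq cvs.span_eq_iff[THEN iffD2, OF C] by metis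
  qed
  moreover have "continuous (at x) (\<lambda>x. x - scaleC (h x) v)" for x
    using hl by (intro continuous_intros linear_continuous_at bounded_linear_compose[OF bounded_linear_scaleC_left])
  ultimately show ?thesis by (simp add: continuous_closed_vimage closed)
qed

lemma closed_cspan_Un_finite:
  fixes F :: "'a::complex_banach set"
  assumes "closed F" "cvs.subspace F" "finite S"
  shows "closed (cvs.span (F \<union> S))"
  using \<open>finite S\<close>
proof induction
  case empty
  then show ?case using assms(1,2) by (simp add: cvs.span_eq_iff[THEN iffD2])
next
  case (insert v S)
  have "cvs.span (F \<union> insert v S) = cvs.span (insert v (cvs.span (F \<union> S)))"
    by (simp add: cvs.span_insert cvs.span_span)
  then show ?case using closed_cspan_insert[OF insert.IH cvs.subspace_span] by simp
qed

lemma BX_D: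
  assumes "S \<in> BX"
  shows "bounded_linear S" "\<And>c x. S (scaleC c x) = scaleC c (S x)"
  using assms unfolding BX_def bounded_clinear_op_def by auto

lemma BX_module_hom: "S \<in> BX \<Longrightarrow> module_hom scaleC scaleC S"
  by (simp add: module_hom_iff cvs.module_axioms BX_D linear_add[OF bounded_linear.linear])

lemma nestD:
  assumes "is_nest \<E>"
  shows "\<And>E. E \<in> \<E> \<Longrightarrow> cvs.subspace E" "\<And>E. E \<in> \<E> \<Longrightarrow> closed E"
    "\<And>E F. E \<in> \<E> \<Longrightarrow> F \<in> \<E> \<Longrightarrow> E \<subseteq> F \<or> F \<subseteq> E"
    "{0} \<in> \<E>" "\<And>\<F>. \<F> \<subseteq> \<E> \<Longrightarrow> \<Inter>\<F> \<in> \<E>"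
    "\<And>\<F>. \<F> \<subseteq> \<E> \<Longrightarrow> closure (cvs.span (\<Union>\<F>)) \<in> \<E>"
  using assms unfolding is_nest_def csubspace_eq closed_span_def cspan_eq by auto

lemma bimoduleD:
  assumes "is_bimodule \<E> \<J>"
  shows "\<J> \<subseteq> BX" "(\<lambda>x. 0) \<in> \<J>" "\<And>S T. S \<in> \<J> \<Longrightarrow> T \<in> \<J> \<Longrightarrow> (\<lambda>x. S x + T x) \<in> \<J>"
    "\<And>c T. T \<in> \<J> \<Longrightarrow> (\<lambda>x. scaleC c (T x)) \<in> \<J>"
    "\<And>A T. A \<in> nest_alg \<E> \<Longrightarrow> T \<in> \<J> \<Longrightarrow> T \<circ> A \<in> \<J>"
  using assms unfolding is_bimodule_def op_subspace_def by auto

definition op_image :: "('a::complex_banach \<Rightarrow> 'a) set \<Rightarrow> 'a set \<Rightarrow> 'a set" where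
  "op_image \<J> E = {T x | T x. T \<in> \<J> \<and> x \<in> E}"

lemma Phi_eq: "Phi \<J> E = closure (cvs.span (op_image \<J> E))"
  unfolding Phi_def op_image_def closed_span_def cspan_eq ..

lemma csubspace_Phi: "cvs.subspace (Phi \<J> E)"
  unfolding Phi_eq by (intro csubspace_closure cvs.subspace_span)

lemma apply_in_Phi: "T \<in> \<J> \<Longrightarrow> x \<in> E \<Longrightarrow> T x \<in> Phi \<J> E"
  unfolding Phi_eq op_image_def by (blast intro: closure_subset[THEN subsetD] cvs.span_base)

lemma Phi_mono: "E \<subseteq> F \<Longrightarrow> Phi \<J> E \<subseteq> Phi \<J> F"
  unfolding Phi_eq op_image_def by (intro closure_mono cvs.span_mono) blast

lemma Phi_least:
  assumes "cvs.subspace K" "closed K" "op_image \<J> E \<subseteq> K"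
  shows "Phi \<J> E \<subseteq> K"
  unfolding Phi_eq using assms by (intro closure_minimal cvs.span_minimal)

lemma Phi_closure_cspan:
  assumes "\<J> \<subseteq> BX"
  shows "Phi \<J> (closure (cvs.span X)) = Phi \<J> X"
proof
  let ?P = "\<Inter>S\<in>\<J>. S -` Phi \<J> X"
  have "closed (S -` Phi \<J> X)" if "S \<in> \<J>" for S
    using that assms BX_D(1)[of S] unfolding Phi_eq
    by (intro continuous_closed_vimage closed_closure linear_continuous_at) auto
  then have "closed ?P" by blast
  moreover have "cvs.subspace ?P"
    using assms by (intro cvs.subspace_Int module_hom.subspace_vimage[OF BX_module_hom] csubspace_Phi) auto
  moreover have "X \<subseteq> ?P" using apply_in_Phi by blast
  ultimately have "closure (cvs.span X) \<subseteq> ?P"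
    by (intro closure_minimal cvs.span_minimal)
  then have "op_image \<J> (closure (cvs.span X)) \<subseteq> Phi \<J> X"
    unfolding op_image_def by blast
  then show "Phi \<J> (closure (cvs.span X)) \<subseteq> Phi \<J> X"
    by (intro Phi_least csubspace_Phi) (simp add: Phi_eq)
next
  show "Phi \<J> X \<subseteq> Phi \<J> (closure (cvs.span X))"
    using cvs.span_superset closure_subset by (intro Phi_mono) blast
qed

lemma Phi_Union_chain:
  assumes "\<J> \<subseteq> BX" "G \<noteq> {}" and chain: "\<And>E F. E \<in> G \<Longrightarrow> F \<in> G \<Longrightarrow> E \<subseteq> F \<or> F \<subseteq> E"
  shows "Phi \<J> (closure (cvs.span (\<Union>G))) \<subseteq> closure (\<Union>F\<in>G. cvs.span (op_image \<J> F))"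
proof -
  have op_image_mono: "op_image \<J> E \<subseteq> op_image \<J> F" if "E \<subseteq> F" for E F
    using that unfolding op_image_def by blast
  have "cvs.subspace (\<Union>F\<in>G. cvs.span (op_image \<J> F))"
  proof (rule cvs.subspace_Union_chain)
    fix X Y assume "X \<in> (\<lambda>F. cvs.span (op_image \<J> F)) ` G" "Y \<in> (\<lambda>F. cvs.span (op_image \<J> F)) ` G"
    then obtain E F where "E \<in> G" "F \<in> G" "X = cvs.span (op_image \<J> E)" "Y = cvs.span (op_image \<J> F)"
      by blast
    then show "X \<subseteq> Y \<or> Y \<subseteq> X"
      using chain[of E F] op_image_mono cvs.span_mono by metis
  qed (use assms(2) in auto)
  then have "cvs.subspace (closure (\<Union>F\<in>G. cvs.span (op_image \<J> F)))"
    by (rule csubspace_closure)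
  moreover have "op_image \<J> (\<Union>G) \<subseteq> closure (\<Union>F\<in>G. cvs.span (op_image \<J> F))"
    unfolding op_image_def by (blast intro: closure_subset[THEN subsetD] cvs.span_base)
  ultimately show ?thesis
    unfolding Phi_closure_cspan[OF assms(1)] by (intro Phi_least) auto
qed

lemma rank_one_in_nest_alg:
  assumes N: "is_nest \<E>" and F: "F \<in> \<E>" and h: "h \<in> cdual" "\<And>z. z \<in> F \<Longrightarrow> h z = 0"
    and y: "\<And>E. E \<in> \<E> \<Longrightarrow> \<not> E \<subseteq> F \<Longrightarrow> y \<in> E"
  shows "(\<lambda>z. scaleC (h z) y) \<in> nest_alg \<E>"
proof -
  have hl: "bounded_linear h" and hC: "\<And>c x. h (scaleC c x) = c * h x"
    using h(1) unfolding cdual_def by auto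
  have "bounded_linear (\<lambda>z. scaleC (h z) y)"
    using bounded_linear_compose[OF bounded_linear_scaleC_left hl] .
  then have "(\<lambda>z. scaleC (h z) y) \<in> BX"
    unfolding BX_def bounded_clinear_op_def by (simp add: hC)
  moreover have "(\<lambda>z. scaleC (h z) y) ` E \<subseteq> E" if E: "E \<in> \<E>" for E
  proof (cases "E \<subseteq> F")
    case True
    then show ?thesis using h(2) cvs.subspace_0[OF nestD(1)[OF N E]] by auto
  next
    case False
    then show ?thesis using y[OF E] cvs.subspace_scale[OF nestD(1)[OF N E]] by blast
  qed
  ultimately show ?thesis unfolding nest_alg_def by blast
qed

text \<open>If \<open>h\<close> kills \<open>F \<union> B\<^sub>0\<close> and \<open>h b = 1\<close>, the operators \<open>S \<circ> (h \<otimes> y)\<close> with \<open>S \<in> \<J>\<close> and \<open>y\<close>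
  in every nest element not contained in \<open>F\<close> lie in \<open>\<J>\<close>, vanish on \<open>B\<^sub>0\<close> and send \<open>b\<close> to \<open>S y\<close>.\<close>

lemma exists_vanishing_approx:
  assumes N: "is_nest \<E>" and M: "is_bimodule \<E> \<J>" and F: "F \<in> \<E>"
    and Y: "\<And>y E. y \<in> Y \<Longrightarrow> E \<in> \<E> \<Longrightarrow> \<not> E \<subseteq> F \<Longrightarrow> y \<in> E"
    and b: "b \<notin> closure (cvs.span (F \<union> B0))"
    and z: "z \<in> Phi \<J> Y" and \<delta>: "\<delta> > 0"
  shows "\<exists>R\<in>\<J>. norm (R b - z) < \<delta> \<and> (\<forall>x\<in>B0. R x = 0)"
proof -
  obtain h where h: "h \<in> cdual" and h0: "\<And>c. c \<in> cvs.span (F \<union> B0) \<Longrightarrow> h c = 0" and hb: "h b = 1"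
    using cdual_separation[OF cvs.subspace_span b] by blast
  have hF: "\<And>x. x \<in> F \<Longrightarrow> h x = 0" and hB0: "\<And>x. x \<in> B0 \<Longrightarrow> h x = 0"
    using h0 cvs.span_superset by blast+
  define D where "D = {R b | R. R \<in> \<J> \<and> (\<forall>x\<in>B0. R x = 0)}"
  have "cvs.subspace D"
    unfolding cvs.subspace_def
  proof (intro conjI ballI allI)
    show "0 \<in> D" unfolding D_def using bimoduleD(2)[OF M] by force
  next
    fix x y assume "x \<in> D" "y \<in> D"
    then show "x + y \<in> D" unfolding D_def using bimoduleD(3)[OF M] by force
  next
    fix c x assume "x \<in> D"
    then show "scaleC c x \<in> D" unfolding D_def using bimoduleD(4)[OF M] by force
  qed
  moreover have "op_image \<J> Y \<subseteq> D"
  proof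
    fix w assume "w \<in> op_image \<J> Y"
    then obtain S y where S: "S \<in> \<J>" and y: "y \<in> Y" and w: "w = S y"
      unfolding op_image_def by blast
    have "S \<circ> (\<lambda>x. scaleC (h x) y) \<in> \<J>"
      using bimoduleD(5)[OF M rank_one_in_nest_alg[OF N F h hF Y[OF y]] S] .
    moreover have "S 0 = 0"
      using S bimoduleD(1)[OF M] BX_module_hom module_hom.zero by blast
    then have "\<forall>x\<in>B0. (S \<circ> (\<lambda>x. scaleC (h x) y)) x = 0" using hB0 by simp
    moreover have "(S \<circ> (\<lambda>x. scaleC (h x) y)) b = w" using hb w by simp
    ultimately show "w \<in> D"
      unfolding D_def by blast
  qed
  ultimately have "Phi \<J> Y \<subseteq> closure D"
    by (intro Phi_least csubspace_closure) (auto intro: closure_subset[THEN subsetD])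
  then obtain w where "w \<in> D" "dist w z < \<delta>"
    using z \<delta> closure_approachable by blast
  then obtain R where "R \<in> \<J>" "\<forall>x\<in>B0. R x = 0" "dist (R b) z < \<delta>"
    unfolding D_def by blast
  then show ?thesis unfolding dist_norm by blast
qed

lemma exists_vanishing_approx_join:
  assumes N: "is_nest \<E>" and M: "is_bimodule \<E> \<J>" and G: "G \<subseteq> \<E>" "G \<noteq> {}"
    and sep: "\<And>F. F \<in> G \<Longrightarrow> b \<notin> closure (cvs.span (F \<union> B0))"
    and z: "z \<in> Phi \<J> (closure (cvs.span (\<Union>G)))" and \<delta>: "\<delta> > 0"
  shows "\<exists>R\<in>\<J>. norm (R b - z) < \<delta> \<and> (\<forall>x\<in>B0. R x = 0)"
proof -
  have "\<And>E F. E \<in> G \<Longrightarrow> F \<in> G \<Longrightarrow> E \<subseteq> F \<or> F \<subseteq> E"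
    using G(1) nestD(3)[OF N] by blast
  then have "z \<in> closure (\<Union>F\<in>G. cvs.span (op_image \<J> F))"
    using Phi_Union_chain[OF bimoduleD(1)[OF M] G(2)] z by blast
  then obtain m where m: "m \<in> (\<Union>F\<in>G. cvs.span (op_image \<J> F))" "dist m z < \<delta>/2"
    using closure_approachable[of z] half_gt_zero[OF \<delta>] by blast
  then obtain F where F: "F \<in> G" and "m \<in> cvs.span (op_image \<J> F)" by blast
  then have "m \<in> Phi \<J> F" unfolding Phi_eq using closure_subset by blast
  moreover have FE: "F \<in> \<E>" using F G(1) by blast
  moreover have "\<And>y E. y \<in> F \<Longrightarrow> E \<in> \<E> \<Longrightarrow> \<not> E \<subseteq> F \<Longrightarrow> y \<in> E"
    using FE nestD(3)[OF N] by blast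
  ultimately obtain R where R: "R \<in> \<J>" "norm (R b - m) < \<delta>/2" "\<forall>x\<in>B0. R x = 0"
    using exists_vanishing_approx[OF N M FE _ sep[OF F], of F m "\<delta>/2"] half_gt_zero[OF \<delta>] by blast
  have "norm (R b - z) \<le> norm (R b - m) + dist m z"
    using norm_triangle_ineq[of "R b - m" "m - z"] by (simp add: dist_norm)
  then have "norm (R b - z) < \<delta>" using R(2) m(2) by linarith
  then show ?thesis using R(1,3) by blast
qed

text \<open>Let \<open>K\<close> be the join of the nest elements missing \<open>b\<close>. Either \<open>b \<in> K\<close>, or \<open>K\<close> itself
  misses \<open>b\<close> and \<open>b\<close> lies in the meet of all nest elements not below \<open>K\<close>.\<close>

lemma exists_vanishing_approx_separated:
  assumes N: "is_nest \<E>" and M: "is_bimodule \<E> \<J>" and "b \<noteq> 0"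
    and sep: "\<And>F. F \<in> \<E> \<Longrightarrow> b \<notin> F \<Longrightarrow> b \<notin> closure (cvs.span (F \<union> B0))"
    and z: "\<And>E. E \<in> \<E> \<Longrightarrow> b \<in> E \<Longrightarrow> z \<in> Phi \<J> E" and \<delta>: "\<delta> > 0"
  shows "\<exists>R\<in>\<J>. norm (R b - z) < \<delta> \<and> (\<forall>x\<in>B0. R x = 0)"
proof -
  define G where "G = {F\<in>\<E>. b \<notin> F}"
  define K where "K = closure (cvs.span (\<Union>G))"
  have GE: "G \<subseteq> \<E>" unfolding G_def by blast
  have KE: "K \<in> \<E>" unfolding K_def using nestD(6)[OF N GE] .
  show ?thesis
  proof (cases "b \<in> K")
    case True
    have "{0} \<in> G" unfolding G_def using nestD(4)[OF N] \<open>b \<noteq> 0\<close> by blast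
    then have "G \<noteq> {}" by blast
    moreover have "\<And>F. F \<in> G \<Longrightarrow> b \<notin> closure (cvs.span (F \<union> B0))"
      using sep unfolding G_def by blast
    ultimately show ?thesis
      using exists_vanishing_approx_join[OF N M GE] z[OF KE True] \<delta> unfolding K_def by blast
  next
    case False
    define Y where "Y = \<Inter>{E\<in>\<E>. \<not> E \<subseteq> K}"
    have GK: "F \<subseteq> K" if "F \<in> G" for F
    proof -
      have "F \<subseteq> \<Union>G" using that by blast
      also have "\<dots> \<subseteq> cvs.span (\<Union>G)" by (rule cvs.span_superset)
      also have "\<dots> \<subseteq> K" unfolding K_def by (rule closure_subset)
      finally show ?thesis .
    qed
    have "b \<in> E" if E: "E \<in> \<E>" "\<not> E \<subseteq> K" for E
    proof (rule ccontr)
      assume "b \<notin> E"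
      then have "E \<in> G" using E(1) unfolding G_def by blast
      then show False using GK E(2) by blast
    qed
    then have "b \<in> Y" unfolding Y_def by blast
    moreover have "Y \<in> \<E>" unfolding Y_def using nestD(5)[OF N, of "{E\<in>\<E>. \<not> E \<subseteq> K}"] by blast
    ultimately have zY: "z \<in> Phi \<J> Y" using z by blast
    have Y: "\<And>y E. y \<in> Y \<Longrightarrow> E \<in> \<E> \<Longrightarrow> \<not> E \<subseteq> K \<Longrightarrow> y \<in> E"
      unfolding Y_def by blast
    show ?thesis
      by (rule exists_vanishing_approx[OF N M KE Y sep[OF KE False] zY \<delta>])
  qed
qed

section \<open>Bases adapted to a nest\<close>

text \<open>Among the independent subsets of \<open>span B\<close> lying in a nest element that does not
  contain \<open>span B\<close>, one of maximal cardinality spans every such trace, because the nest is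
  totally ordered.\<close>

lemma exists_cspan_covering_nest_traces:
  assumes N: "is_nest \<E>" and B: "finite B" "cvs.independent B" "B \<noteq> {}"
  obtains I where "cvs.independent I" "I \<subseteq> cvs.span B" "\<not> cvs.span B \<subseteq> cvs.span I"
    "\<And>F. F \<in> \<E> \<Longrightarrow> \<not> cvs.span B \<subseteq> F \<Longrightarrow> F \<inter> cvs.span B \<subseteq> cvs.span I"
proof -
  define V where "V = cvs.span B"
  define P where "P I \<longleftrightarrow> cvs.independent I \<and> I \<subseteq> V \<and> (\<exists>F\<in>\<E>. \<not> V \<subseteq> F \<and> I \<subseteq> F)" for I
  have bounded: "finite I \<and> card I \<le> card B" if "P I" for I
    using that cvs.independent_span_bound[OF B(1)] unfolding P_def V_def by blast
  obtain b where "b \<in> B" using B(3) by blast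
  then have "b \<in> V" "b \<noteq> 0"
    using B(2) cvs.span_base cvs.dependent_zero unfolding V_def by blast+
  then have "P {}" unfolding P_def using nestD(4)[OF N] cvs.independent_empty by blast
  moreover have "\<forall>I. P I \<longrightarrow> card I < card B + 1" using bounded by fastforce
  ultimately obtain I where I: "P I" and I_max: "\<And>I'. P I' \<Longrightarrow> card I' \<le> card I"
    using ex_has_greatest_nat[of P "{}" card "card B + 1"] by blast
  obtain F0 where F0: "F0 \<in> \<E>" "\<not> V \<subseteq> F0" "I \<subseteq> F0" using I unfolding P_def by blast
  have span_I: "cvs.span I \<subseteq> F0" using cvs.span_minimal[OF F0(3) nestD(1)[OF N F0(1)]] .
  have traces: "F \<inter> V \<subseteq> cvs.span I" if F: "F \<in> \<E>" "\<not> V \<subseteq> F" for F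
  proof
    fix x assume x: "x \<in> F \<inter> V"
    show "x \<in> cvs.span I"
    proof (rule ccontr)
      assume x_I: "x \<notin> cvs.span I"
      obtain F1 where F1: "F1 \<in> \<E>" "\<not> V \<subseteq> F1" "insert x I \<subseteq> F1"
      proof (cases "F \<subseteq> F0")
        case True
        then show ?thesis using that[of F0] F0 x by blast
      next
        case False
        then have "I \<subseteq> F" using nestD(3)[OF N F(1) F0(1)] F0(3) by blast
        then show ?thesis using that[of F] F x by blast
      qed
      moreover have "cvs.independent (insert x I)" "insert x I \<subseteq> V"
        using I x cvs.independent_insertI[OF x_I] unfolding P_def by auto
      ultimately have "P (insert x I)" unfolding P_def by blast
      then have "card (insert x I) \<le> card I" by (rule I_max)
      moreover have "x \<notin> I" using x_I cvs.span_base by blast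
      ultimately show False using bounded[OF I] by simp
    qed
  qed
  have "\<not> V \<subseteq> cvs.span I" using span_I F0(2) by blast
  moreover have "cvs.independent I" "I \<subseteq> V" using I unfolding P_def by auto
  ultimately show ?thesis using that traces unfolding V_def by blast
qed

lemma not_in_closure_cspan_Un:
  assumes F: "closed F" "cvs.subspace F" and B0: "finite B0" "b \<notin> cvs.span B0"
    and trace: "F \<inter> cvs.span (insert b B0) \<subseteq> cvs.span B0"
  shows "b \<notin> closure (cvs.span (F \<union> B0))"
proof
  assume "b \<in> closure (cvs.span (F \<union> B0))"
  moreover have "closed (cvs.span (F \<union> B0))" using F B0(1) by (rule closed_cspan_Un_finite)
  ultimately obtain f w where fw: "b = f + w" "f \<in> cvs.span F" "w \<in> cvs.span B0"
    unfolding cvs.span_Un by auto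
  have "f \<in> F" using fw(2) cvs.span_eq_iff[THEN iffD2, OF F(2)] by blast
  moreover have "b \<in> cvs.span (insert b B0)" by (rule cvs.span_base) simp
  moreover have "w \<in> cvs.span (insert b B0)" using fw(3) cvs.span_mono[OF subset_insertI] by blast
  ultimately have "f \<in> F \<inter> cvs.span (insert b B0)"
    using fw(1) cvs.subspace_diff[OF cvs.subspace_span, of b "insert b B0" w] by simp
  then have "f \<in> cvs.span B0" using trace by blast
  then have "b \<in> cvs.span B0" using fw(1,3) cvs.span_add by blast
  with B0(2) show False ..
qed

lemma exists_separated_vector:
  assumes N: "is_nest \<E>" and B: "finite B" "cvs.independent B" "B \<noteq> {}"
  obtains b B0 where "finite B0" "cvs.independent B0" "card B0 < card B" "b \<noteq> 0"
    "B \<subseteq> cvs.span (insert b B0)"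
    "\<And>F. F \<in> \<E> \<Longrightarrow> b \<notin> F \<Longrightarrow> b \<notin> closure (cvs.span (F \<union> B0))"
proof -
  define V where "V = cvs.span B"
  obtain I where I: "cvs.independent I" "I \<subseteq> V" "\<not> V \<subseteq> cvs.span I"
    and traces: "\<And>F. F \<in> \<E> \<Longrightarrow> \<not> V \<subseteq> F \<Longrightarrow> F \<inter> V \<subseteq> cvs.span I"
    using exists_cspan_covering_nest_traces[OF N B] unfolding V_def by blast
  obtain B' where B': "I \<subseteq> B'" "B' \<subseteq> V" "cvs.independent B'" "V \<subseteq> cvs.span B'"
    using cvs.maximal_independent_subset_extend[OF I(2,1)] by blast
  have B'_bound: "finite B'" "card B' \<le> card B"
    using cvs.independent_span_bound[OF B(1) B'(3)] B'(2) unfolding V_def by auto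
  obtain b where b: "b \<in> B'" "b \<notin> I"
    using B'(4) I(3) cvs.span_mono[of B' I] by blast
  define B0 where "B0 = B' - {b}"
  have B'_eq: "B' = insert b B0" using b(1) unfolding B0_def by blast
  have "b \<in> V" using b(1) B'(2) by blast
  have B0_I: "I \<subseteq> B0" using B'(1) b(2) unfolding B0_def by blast
  have span_V: "cvs.span (insert b B0) \<subseteq> V"
    using B'(2) unfolding B'_eq V_def by (intro cvs.span_minimal) auto
  have sep: "b \<notin> closure (cvs.span (F \<union> B0))" if F: "F \<in> \<E>" "b \<notin> F" for F
  proof (rule not_in_closure_cspan_Un)
    show "closed F" "cvs.subspace F" using nestD(1,2)[OF N F(1)] by auto
    show "finite B0" using B'_bound(1) unfolding B0_def by blast
    show "b \<notin> cvs.span B0"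
      using B'(3) b(1) unfolding B0_def cvs.dependent_def by blast
    have "\<not> V \<subseteq> F" using F(2) \<open>b \<in> V\<close> by blast
    then show "F \<inter> cvs.span (insert b B0) \<subseteq> cvs.span B0"
      using traces[OF F(1)] span_V cvs.span_mono[OF B0_I] by blast
  qed
  have "finite B0" "card B0 < card B"
    using B'_bound b(1) card_Diff1_less[of B' b] unfolding B0_def by auto
  moreover have "cvs.independent B0"
    using B'(3) unfolding B0_def by (rule cvs.independent_mono) blast
  moreover have "b \<noteq> 0" using B'(3) b(1) cvs.dependent_zero by blast
  moreover have "B \<subseteq> cvs.span (insert b B0)"
    using B'(4) cvs.span_superset[of B] unfolding B'_eq V_def by blast
  ultimately show ?thesis using that sep by blast
qed

section \<open>Approximation on finite sets\<close>

definition approximable_on :: "('a::complex_banach \<Rightarrow> 'a) set \<Rightarrow> ('a \<Rightarrow> 'a) \<Rightarrow> 'a set \<Rightarrow> bool" where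
  "approximable_on \<J> T A \<longleftrightarrow> (\<forall>\<delta>>0. \<exists>S\<in>\<J>. \<forall>x\<in>A. norm (S x - T x) < \<delta>)"

lemma norm_le_sum_on_cspan:
  fixes x :: "'a::complex_banach"
  assumes "finite A" "x \<in> cvs.span A"
  shows "\<exists>C. \<forall>f::'a \<Rightarrow> 'a. module_hom scaleC scaleC f \<longrightarrow> norm (f x) \<le> C * (\<Sum>a\<in>A. norm (f a))"
  using assms(2)
proof (induction rule: cvs.span_induct_alt)
  case base
  show ?case by (intro exI[of _ 0]) (simp add: module_hom.zero)
next
  case (step c a y)
  then obtain C where C: "\<And>f::'a \<Rightarrow> 'a. module_hom scaleC scaleC f \<Longrightarrow> norm (f y) \<le> C * (\<Sum>a\<in>A. norm (f a))"
    by blast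
  have "norm (f (scaleC c a + y)) \<le> (cmod c + C) * (\<Sum>a\<in>A. norm (f a))"
    if f: "module_hom scaleC scaleC f" for f :: "'a \<Rightarrow> 'a"
  proof -
    have "norm (f (scaleC c a + y)) \<le> cmod c * norm (f a) + norm (f y)"
      using norm_triangle_ineq[of "scaleC c (f a)" "f y"]
      by (simp add: module_hom.add[OF f] module_hom.scale[OF f] norm_scaleC)
    also have "\<dots> \<le> cmod c * (\<Sum>a\<in>A. norm (f a)) + C * (\<Sum>a\<in>A. norm (f a))"
      using C[OF f] member_le_sum[OF step.hyps(1) _ assms(1), of "\<lambda>a. norm (f a)"]
      by (simp add: add_mono mult_left_mono)
    finally show ?thesis by (simp add: distrib_right)
  qed
  then show ?case by blast
qed

lemma approximable_on_cspan:
  assumes \<J>: "\<J> \<subseteq> BX" and T: "T \<in> BX" and B: "finite B" "approximable_on \<J> T B"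
    and A: "finite A" "A \<subseteq> cvs.span B"
  shows "approximable_on \<J> T A"
  unfolding approximable_on_def
proof (intro allI impI)
  fix \<delta> :: real assume \<delta>: "\<delta> > 0"
  have "\<forall>x\<in>A. \<exists>C. \<forall>f::'a \<Rightarrow> 'a. module_hom scaleC scaleC f \<longrightarrow> norm (f x) \<le> C * (\<Sum>b\<in>B. norm (f b))"
    using A norm_le_sum_on_cspan[OF B(1)] by blast
  then obtain C where C: "\<And>x (f::'a \<Rightarrow> 'a). x \<in> A \<Longrightarrow> module_hom scaleC scaleC f \<Longrightarrow>
      norm (f x) \<le> C x * (\<Sum>b\<in>B. norm (f b))"
    by metis
  define K where "K = 1 + (\<Sum>x\<in>A. \<bar>C x\<bar>)"
  have "K > 0" unfolding K_def by (simp add: add_pos_nonneg sum_nonneg)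
  have "C x \<le> K" if "x \<in> A" for x
  proof -
    have "\<bar>C x\<bar> \<le> (\<Sum>x\<in>A. \<bar>C x\<bar>)" by (rule member_le_sum[OF that _ A(1)]) simp
    then show ?thesis unfolding K_def by linarith
  qed
  note K = \<open>K > 0\<close> this
  have tol: "\<delta> / (K * (card B + 1)) > 0" using \<delta> K(1) by simp
  then obtain S where S: "S \<in> \<J>" "\<And>b. b \<in> B \<Longrightarrow> norm (S b - T b) < \<delta> / (K * (card B + 1))"
    using B(2) unfolding approximable_on_def by blast
  have f: "module_hom scaleC scaleC (\<lambda>x. S x - T x)"
    using BX_module_hom[of S] BX_module_hom[OF T] S(1) \<J>
    by (auto simp: module_hom_iff cvs.scale_right_diff_distrib)
  have "(\<Sum>b\<in>B. norm (S b - T b)) \<le> card B * (\<delta> / (K * (card B + 1)))"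
    using sum_bounded_above[of B "\<lambda>b. norm (S b - T b)", OF less_imp_le[OF S(2)]] by simp
  also have "\<dots> < (card B + 1) * (\<delta> / (K * (card B + 1)))"
    using tol by (intro mult_strict_right_mono) auto
  also have "\<dots> = \<delta> / K" by simp
  finally have sum: "(\<Sum>b\<in>B. norm (S b - T b)) < \<delta> / K" .
  have "norm (S x - T x) < \<delta>" if x: "x \<in> A" for x
  proof -
    have "norm (S x - T x) \<le> C x * (\<Sum>b\<in>B. norm (S b - T b))" using C[OF x f] .
    also have "\<dots> \<le> K * (\<Sum>b\<in>B. norm (S b - T b))"
      using K(2)[OF x] by (intro mult_right_mono sum_nonneg) auto
    also have "\<dots> < K * (\<delta> / K)"
      using sum K(1) by (intro mult_strict_left_mono)
    also have "\<dots> = \<delta>" using K(1) by simp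
    finally show ?thesis .
  qed
  then show "\<exists>S\<in>\<J>. \<forall>x\<in>A. norm (S x - T x) < \<delta>" using S(1) by blast
qed

lemma approximable_on_insert_separated:
  assumes N: "is_nest \<E>" and M: "is_bimodule \<E> \<J>" and T: "T \<in> Mop \<E> (Phi \<J>)" and "b \<noteq> 0"
    and sep: "\<And>F. F \<in> \<E> \<Longrightarrow> b \<notin> F \<Longrightarrow> b \<notin> closure (cvs.span (F \<union> B0))"
    and B0: "approximable_on \<J> T B0"
  shows "approximable_on \<J> T (insert b B0)"
  unfolding approximable_on_def
proof (intro allI impI)
  fix \<delta> :: real assume \<delta>: "\<delta> > 0"
  obtain S where S: "S \<in> \<J>" "\<And>x. x \<in> B0 \<Longrightarrow> norm (S x - T x) < \<delta>"
    using B0 \<delta> unfolding approximable_on_def by blast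
  have z: "T b - S b \<in> Phi \<J> E" if "E \<in> \<E>" "b \<in> E" for E
  proof (rule cvs.subspace_diff[OF csubspace_Phi[of \<J> E]])
    show "T b \<in> Phi \<J> E" using T that unfolding Mop_def by blast
    show "S b \<in> Phi \<J> E" using apply_in_Phi[OF S(1) that(2)] .
  qed
  have "\<exists>R\<in>\<J>. norm (R b - (T b - S b)) < \<delta> \<and> (\<forall>x\<in>B0. R x = 0)"
    using sep z \<delta> by (rule exists_vanishing_approx_separated[OF N M \<open>b \<noteq> 0\<close>])
  then obtain R where R: "R \<in> \<J>" "norm (R b - (T b - S b)) < \<delta>" "\<forall>x\<in>B0. R x = 0"
    by blast
  have "\<forall>x\<in>insert b B0. norm (S x + R x - T x) < \<delta>"
  proof
    fix x assume x: "x \<in> insert b B0"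
    show "norm (S x + R x - T x) < \<delta>"
    proof (cases "x = b")
      case True
      then show ?thesis using R(2) by (simp add: algebra_simps)
    next
      case False
      then show ?thesis using x S(2) R(3) by simp
    qed
  qed
  moreover have "(\<lambda>x. S x + R x) \<in> \<J>" using bimoduleD(3)[OF M S(1) R(1)] .
  ultimately show "\<exists>S\<in>\<J>. \<forall>x\<in>insert b B0. norm (S x - T x) < \<delta>"
    by (intro bexI[of _ "\<lambda>x. S x + R x"])
qed

lemma Mop_approximable_on_independent:
  assumes N: "is_nest \<E>" and M: "is_bimodule \<E> \<J>" and T: "T \<in> Mop \<E> (Phi \<J>)"
  shows "finite B \<Longrightarrow> cvs.independent B \<Longrightarrow> approximable_on \<J> T B"
proof (induction "card B" arbitrary: B rule: less_induct)
  case less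
  show ?case
  proof (cases "B = {}")
    case True
    then show ?thesis using bimoduleD(2)[OF M] unfolding approximable_on_def by auto
  next
    case False
    obtain b B0 where B0: "finite B0" "cvs.independent B0" "card B0 < card B" "b \<noteq> 0"
      "B \<subseteq> cvs.span (insert b B0)"
      and sep: "\<And>F. F \<in> \<E> \<Longrightarrow> b \<notin> F \<Longrightarrow> b \<notin> closure (cvs.span (F \<union> B0))"
      using exists_separated_vector[OF N less.prems False] by metis
    have "approximable_on \<J> T B0" using less.hyps[OF B0(3,1,2)] .
    with sep have "approximable_on \<J> T (insert b B0)"
      by (rule approximable_on_insert_separated[OF N M T B0(4)])
    moreover have "finite (insert b B0)" "T \<in> BX"
      using B0(1) T unfolding Mop_def by auto
    ultimately show ?thesis
      using approximable_on_cspan[OF bimoduleD(1)[OF M]] less.prems(1) B0(5) by blast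
  qed
qed

lemma Mop_approximable_on_finite:
  assumes N: "is_nest \<E>" and M: "is_bimodule \<E> \<J>" and T: "T \<in> Mop \<E> (Phi \<J>)" and A: "finite A"
  shows "approximable_on \<J> T A"
proof -
  obtain B where B: "B \<subseteq> A" "cvs.independent B" "A \<subseteq> cvs.span B"
    using cvs.maximal_independent_subset[of A] by blast
  have "finite B" using B(1) A by (rule finite_subset)
  then have "approximable_on \<J> T B"
    using Mop_approximable_on_independent[OF N M T] B(2) by blast
  moreover have "T \<in> BX" using T unfolding Mop_def by blast
  ultimately show ?thesis
    using approximable_on_cspan[OF bimoduleD(1)[OF M]] \<open>finite B\<close> A B(3) by blast
qed

lemma approximable_on_finite_imp_wot_closure:
  assumes T: "T \<in> BX" and approx: "\<And>A. finite A \<Longrightarrow> approximable_on \<J> T A"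
  shows "T \<in> wot_closure \<J>"
  unfolding wot_closure_def
proof (intro CollectI conjI allI impI T)
  fix P :: "('a \<times> ('a \<Rightarrow> complex)) set" and e :: real
  assume "finite P \<and> P \<subseteq> UNIV \<times> cdual \<and> e > 0"
  then have P: "finite P" "\<And>x f. (x, f) \<in> P \<Longrightarrow> bounded_linear f" and e: "e > 0"
    unfolding cdual_def by auto
  define K where "K = 1 + (\<Sum>p\<in>P. onorm (snd p))"
  have "K > 0"
    unfolding K_def using P(2) by (auto intro!: add_pos_nonneg sum_nonneg onorm_pos_le)
  have K: "onorm f \<le> K" if "(x, f) \<in> P" for x f
  proof -
    have "onorm (snd (x, f)) \<le> (\<Sum>p\<in>P. onorm (snd p))"
      using P that by (intro member_le_sum) (auto intro: onorm_pos_le)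
    then show ?thesis unfolding K_def by simp
  qed
  have "approximable_on \<J> T (fst ` P)" using approx P(1) by blast
  moreover have "e / K > 0" using e \<open>K > 0\<close> by simp
  ultimately obtain S where S: "S \<in> \<J>" "\<And>x. x \<in> fst ` P \<Longrightarrow> norm (S x - T x) < e / K"
    unfolding approximable_on_def by blast
  have "cmod (f (T x) - f (S x)) < e" if xf: "(x, f) \<in> P" for x f
  proof -
    have "cmod (f (T x) - f (S x)) = norm (f (T x - S x))"
      using linear_diff[OF bounded_linear.linear[OF P(2)[OF xf]]] by simp
    also have "\<dots> \<le> onorm f * norm (T x - S x)"
      by (rule onorm[OF P(2)[OF xf]])
    also have "\<dots> \<le> K * norm (S x - T x)"
      using K[OF xf] by (simp add: norm_minus_commute mult_right_mono)
    also have "\<dots> < K * (e / K)"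
      using S(2)[of x] xf \<open>K > 0\<close> by (intro mult_strict_left_mono) force+
    also have "\<dots> = e" using \<open>K > 0\<close> by simp
    finally show ?thesis .
  qed
  then show "\<exists>S\<in>\<J>. \<forall>(x, f)\<in>P. cmod (f (T x) - f (S x)) < e" using S(1) by blast
qed

lemma subset_Mop_Phi: "\<J> \<subseteq> BX \<Longrightarrow> \<J> \<subseteq> Mop \<E> (Phi \<J>)"
  unfolding Mop_def using apply_in_Phi by blast

lemma subset_Ref: "\<J> \<subseteq> BX \<Longrightarrow> \<J> \<subseteq> Ref \<J>"
  unfolding Ref_def closed_span_def cspan_eq
  by (blast intro: closure_subset[THEN subsetD] cvs.span_base)

lemma Ref_subset_Mop_Phi: "Ref \<J> \<subseteq> Mop \<E> (Phi \<J>)"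
proof -
  have "closed_span {A x | A. A \<in> \<J>} \<subseteq> Phi \<J> E" if "x \<in> E" for x E
    unfolding closed_span_def cspan_eq Phi_eq op_image_def
    using that by (intro closure_mono cvs.span_mono) blast
  then show ?thesis unfolding Ref_def Mop_def by blast
qed

theorem mainTheorem12:
  fixes \<E> :: "'a::complex_banach set set" and \<J> :: "('a \<Rightarrow> 'a) set"
  assumes "is_nest \<E>"
    and "is_bimodule \<E> \<J>"
    and "wot_closed \<J>"
  shows "\<J> = Mop \<E> (Phi \<J>) \<and> \<J> = Ref \<J>"
proof -
  have BX: "\<J> \<subseteq> BX" using bimoduleD(1)[OF assms(2)] .
  have "Mop \<E> (Phi \<J>) \<subseteq> \<J>"
  proof
    fix T assume T: "T \<in> Mop \<E> (Phi \<J>)"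
    have "T \<in> wot_closure \<J>"
      using T Mop_approximable_on_finite[OF assms(1,2) T]
      by (intro approximable_on_finite_imp_wot_closure) (auto simp: Mop_def)
    then show "T \<in> \<J>" using assms(3) unfolding wot_closed_def by blast
  qed
  then show ?thesis using subset_Mop_Phi[OF BX] subset_Ref[OF BX] Ref_subset_Mop_Phi by blast
qed

end
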